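(* There is an absolute constant $C>0$ such that every Hamming-trigraph with sensitivity $\varepsilon\in(0,1]$ has VC-dimension at most $C/\varepsilon^2$ (independently of the dimension $N$).
   Context: A trigraph is $T=(V,E,R)$ where $V$ is a finite vertex set, $E$ (plain edges) and $R$ (red edges) are disjoint sets of unordered pairs of distinct vertices; $N[v]$ is $v$ together with its plain neighbours and $R(v)$ its red neighbours. A set $X\subseteq V$ is shattered if there is a set $S$ of $2^{|X|}$ vertices, none having a red neighbour in $X$, such that for every $Y\subseteq X$ some $v_Y\in S$ has $N[v_Y]\cap X=Y$; the VC-dimension is the largest size of a shattered set. A Hamming-trigraph with threshold $\tau$ and sensitivity $\varepsilon$ is a trigraph with $V\subseteq\{0,1\}^N$ for some $N$, $E=\{uv:d_H(u,v)\leq\tau N\}$ and $R=\{uv:\tau N<d_H(u,v)\leq(\tau+\varepsilon)N\}$, where $d_H$ is Hamming distance. *)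

theory Defs
  imports Complex_Main
begin

definition trigraph :: "'a set \<Rightarrow> 'a set set \<Rightarrow> 'a set set \<Rightarrow> bool" where
  "trigraph V E R \<longleftrightarrow> finite V
     \<and> E \<subseteq> {{u, v} | u v. u \<in> V \<and> v \<in> V \<and> u \<noteq> v}
     \<and> R \<subseteq> {{u, v} | u v. u \<in> V \<and> v \<in> V \<and> u \<noteq> v}
     \<and> E \<inter> R = {}"

definition closed_nbhd :: "'a set set \<Rightarrow> 'a \<Rightarrow> 'a set" where
  "closed_nbhd E v = insert v {u. {u, v} \<in> E}"

definition red_nbhd :: "'a set set \<Rightarrow> 'a \<Rightarrow> 'a set" where
  "red_nbhd R v = {u. {u, v} \<in> R}"

definition shattered :: "'a set \<Rightarrow> 'a set set \<Rightarrow> 'a set set \<Rightarrow> 'a set \<Rightarrow> bool" where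
  "shattered V E R X \<longleftrightarrow> X \<subseteq> V \<and>
     (\<exists>S \<subseteq> V. card S = 2 ^ card X
        \<and> (\<forall>v \<in> S. red_nbhd R v \<inter> X = {})
        \<and> (\<forall>Y \<subseteq> X. \<exists>v \<in> S. closed_nbhd E v \<inter> X = Y))"

text \<open>VC-dimension: the largest size of a shattered set (0 if there is none;
  on nat, Sup of the empty set is 0 and Sup of a finite set is its Max).\<close>
definition vc_dim :: "'a set \<Rightarrow> 'a set set \<Rightarrow> 'a set set \<Rightarrow> nat" where
  "vc_dim V E R = Sup (card ` {X. shattered V E R X})"

text \<open>Vertices of {0,1}^N are boolean lists of length N.\<close>
definition hamming :: "bool list \<Rightarrow> bool list \<Rightarrow> nat" where
  "hamming u v = card {i. i < length u \<and> u ! i \<noteq> v ! i}"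

definition hamming_trigraph ::
  "nat \<Rightarrow> real \<Rightarrow> real \<Rightarrow> bool list set \<Rightarrow> bool list set set \<Rightarrow> bool list set set \<Rightarrow> bool" where
  "hamming_trigraph N \<tau> \<epsilon> V E R \<longleftrightarrow>
     (\<forall>v \<in> V. length v = N)
     \<and> E = {{u, v} | u v. u \<in> V \<and> v \<in> V \<and> u \<noteq> v \<and> real (hamming u v) \<le> \<tau> * real N}
     \<and> R = {{u, v} | u v. u \<in> V \<and> v \<in> V \<and> u \<noteq> v \<and>
              \<tau> * real N < real (hamming u v) \<and> real (hamming u v) \<le> (\<tau> + \<epsilon>) * real N}"

end

theory Submission
  imports Defs "HOL-Analysis.Convex"
begin

text \<open>Split a shattered set X into m = |X| div 2 disjoint pairs (a_j, b_j) and view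
  f_j = b_j - a_j as vectors in [-1,1]^N. Greedily choose signs s_j so that the signed sum
  w = \<Sum> s_j f_j has squared norm at most mN. Let Y contain a_j or b_j according to s_j and take
  the vertex c realising Y. Since no vertex of X is a red neighbour of c, the chosen member of
  each pair is within distance \<tau>N of c and the other one beyond (\<tau>+\<epsilon>)N. Distance from c is
  affine in the point, so the total gap m\<epsilon>N equals a functional of w with coefficients \<plusminus>1,
  which Cauchy-Schwarz bounds by N sqrt m. Hence m\<epsilon>^2 < 1 and |X| \<le> 3/\<epsilon>^2.\<close>

lemma hamming_commute: "length u = length v \<Longrightarrow> hamming u v = hamming v u"
  unfolding hamming_def by metis

lemma hamming_self [simp]: "hamming u u = 0"
  unfolding hamming_def by simp

lemma hamming_eq_sum:
  assumes "length u = N"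
  shows "real (hamming u v) = (\<Sum>i<N. of_bool (u ! i \<noteq> v ! i))"
proof -
  have "{i. i < length u \<and> u ! i \<noteq> v ! i} = {i \<in> {..<N}. u ! i \<noteq> v ! i}"
    using assms by auto
  then show ?thesis
    unfolding hamming_def by (simp add: sum.If_cases Int_def)
qed

lemma hamming_diff_eq_sum:
  assumes "length c = N"
  shows "real (hamming c v) - real (hamming c u) =
    (\<Sum>i<N. (if c ! i then -1 else 1) * (of_bool (v ! i) - of_bool (u ! i)))"
  unfolding hamming_eq_sum[OF assms] sum_subtractf[symmetric]
  by (rule sum.cong) auto

lemma hamming_trigraph_closed_nbhd_iff:
  assumes "hamming_trigraph N \<tau> \<epsilon> V E R" "c \<in> V" "x \<in> V" "x \<noteq> c"
  shows "x \<in> closed_nbhd E c \<longleftrightarrow> real (hamming c x) \<le> \<tau> * real N"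
proof -
  have "length c = length x" using assms unfolding hamming_trigraph_def by auto
  note sym = hamming_commute[OF this]
  show ?thesis
    using assms sym unfolding hamming_trigraph_def closed_nbhd_def by (auto simp: doubleton_eq_iff)
qed

lemma hamming_trigraph_red_nbhd_iff:
  assumes "hamming_trigraph N \<tau> \<epsilon> V E R" "c \<in> V" "x \<in> V" "x \<noteq> c"
  shows "x \<in> red_nbhd R c \<longleftrightarrow>
    \<tau> * real N < real (hamming c x) \<and> real (hamming c x) \<le> (\<tau> + \<epsilon>) * real N"
proof -
  have "length c = length x" using assms unfolding hamming_trigraph_def by auto
  note sym = hamming_commute[OF this]
  show ?thesis
    using assms sym unfolding hamming_trigraph_def red_nbhd_def by (auto simp: doubleton_eq_iff)
qed

lemma shattered_witness:
  assumes "shattered V E R X" "Y \<subseteq> X"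
  obtains c where "c \<in> V" "red_nbhd R c \<inter> X = {}" "closed_nbhd E c \<inter> X = Y"
proof -
  from assms(1) obtain S where S: "S \<subseteq> V" "\<forall>v \<in> S. red_nbhd R v \<inter> X = {}"
    "\<forall>Y \<subseteq> X. \<exists>v \<in> S. closed_nbhd E v \<inter> X = Y"
    unfolding shattered_def by (elim conjE exE)
  from S(3) assms(2) obtain c where "c \<in> S" "closed_nbhd E c \<inter> X = Y" by blast
  with S(1,2) show ?thesis using that by blast
qed

lemma hamming_trigraph_shattered_card_le_1:
  assumes H: "hamming_trigraph N \<tau> \<epsilon> V E R" and neg: "\<tau> * real N < 0"
    and sh: "shattered V E R X"
  shows "card X \<le> 1"
proof -
  obtain c where c: "c \<in> V" "closed_nbhd E c \<inter> X = X"
    using shattered_witness[OF sh order_refl] .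
  have XV: "X \<subseteq> V" using sh unfolding shattered_def by blast
  have "x = c" if "x \<in> X" for x
  proof (rule ccontr)
    assume "x \<noteq> c"
    have "x \<in> closed_nbhd E c" "x \<in> V" using that c(2) XV by auto
    then have "real (hamming c x) \<le> \<tau> * real N"
      using hamming_trigraph_closed_nbhd_iff[OF H c(1) _ \<open>x \<noteq> c\<close>] by simp
    with neg show False by simp
  qed
  then have "X \<subseteq> {c}" by blast
  then show ?thesis
    using card_mono[of "{c}" X] by simp
qed

lemma hamming_trigraph_shattered_gap:
  assumes H: "hamming_trigraph N \<tau> \<epsilon> V E R" and nonneg: "0 \<le> \<tau> * real N"
    and sh: "shattered V E R X" and "Y \<subseteq> X"
  obtains c where "length c = N"
    and "\<And>p q. p \<in> Y \<Longrightarrow> q \<in> X - Y \<Longrightarrow> \<epsilon> * real N < real (hamming c q) - real (hamming c p)"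
proof -
  obtain c where c: "c \<in> V" "red_nbhd R c \<inter> X = {}" "closed_nbhd E c \<inter> X = Y"
    using shattered_witness[OF sh \<open>Y \<subseteq> X\<close>] .
  have XV: "X \<subseteq> V" using sh unfolding shattered_def by blast
  \<comment> \<open>the sign of \<tau>N matters only when the witness c itself lies in Y\<close>
  have near: "real (hamming c p) \<le> \<tau> * real N" if "p \<in> Y" for p
  proof (cases "p = c")
    case False
    have "p \<in> closed_nbhd E c" "p \<in> V" using that c(3) XV by auto
    with False show ?thesis using hamming_trigraph_closed_nbhd_iff[OF H c(1)] by blast
  qed (use nonneg in simp)
  have far: "(\<tau> + \<epsilon>) * real N < real (hamming c q)" if "q \<in> X - Y" for q
  proof -
    have q: "q \<notin> closed_nbhd E c" "q \<notin> red_nbhd R c" "q \<in> V" using that c XV by auto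
    then have "q \<noteq> c" unfolding closed_nbhd_def by blast
    with q show ?thesis
      using hamming_trigraph_closed_nbhd_iff[OF H c(1) q(3)] hamming_trigraph_red_nbhd_iff[OF H c(1) q(3)]
      by linarith
  qed
  show ?thesis
  proof
    show "length c = N" using H c(1) unfolding hamming_trigraph_def by blast
    show "\<epsilon> * real N < real (hamming c q) - real (hamming c p)" if "p \<in> Y" "q \<in> X - Y" for p q
      using near[OF that(1)] far[OF that(2)] by (simp add: algebra_simps)
  qed
qed

text \<open>Greedy signing: each new sign is chosen so that the cross term with the partial sum is
  non-positive, hence every step adds at most N to the squared norm.\<close>
lemma sign_choice_sum_squares_le:
  fixes f :: "nat \<Rightarrow> nat \<Rightarrow> 'a::linordered_idom"
  assumes bounded: "\<And>j i. \<bar>f j i\<bar> \<le> 1"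
  shows "\<exists>s. (\<forall>j. s j = 1 \<or> s j = -1) \<and> (\<Sum>i<N. (\<Sum>j<m. s j * f j i)\<^sup>2) \<le> of_nat m * of_nat N"
proof (induction m)
  case 0
  show ?case by (rule exI[of _ "\<lambda>_. 1"]) simp
next
  case (Suc m)
  then obtain s where s: "\<forall>j. s j = 1 \<or> s j = -1" "(\<Sum>i<N. (\<Sum>j<m. s j * f j i)\<^sup>2) \<le> of_nat m * of_nat N"
    by blast
  define w where "w i = (\<Sum>j<m. s j * f j i)" for i
  define t :: 'a where "t = (if (\<Sum>i<N. w i * f m i) \<le> 0 then 1 else -1)"
  have t_sq: "t * t = 1" and cross: "t * (\<Sum>i<N. w i * f m i) \<le> 0"
    unfolding t_def by auto
  have "(\<Sum>i<N. (\<Sum>j<Suc m. (s(m := t)) j * f j i)\<^sup>2)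
      = (\<Sum>i<N. (w i)\<^sup>2) + 2 * (t * (\<Sum>i<N. w i * f m i)) + (\<Sum>i<N. (t * t) * (f m i)\<^sup>2)"
    by (simp add: w_def power2_eq_square algebra_simps sum.distrib sum_distrib_left)
  also have "\<dots> \<le> of_nat m * of_nat N + 0 + (\<Sum>i<N. 1)"
    using s(2) cross bounded unfolding w_def t_sq
    by (intro add_mono sum_mono) (auto simp: abs_square_le_1)
  also have "\<dots> = of_nat (Suc m) * of_nat N" by (simp add: algebra_simps)
  finally have "(\<Sum>i<N. (\<Sum>j<Suc m. (s(m := t)) j * f j i)\<^sup>2) \<le> of_nat (Suc m) * of_nat N" .
  moreover have "\<forall>j. (s(m := t)) j = 1 \<or> (s(m := t)) j = -1"
    using s(1) by (simp add: t_def)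
  ultimately show ?case by blast
qed

lemma sign_choice_bounds_functionals:
  fixes f :: "nat \<Rightarrow> nat \<Rightarrow> real"
  assumes "\<And>j i. \<bar>f j i\<bar> \<le> 1"
  obtains s where "\<And>j. s j = 1 \<or> s j = -1"
    and "\<And>g. (\<And>i. \<bar>g i\<bar> \<le> 1) \<Longrightarrow> (\<Sum>j<m. s j * (\<Sum>i<N. g i * f j i))\<^sup>2 \<le> real m * (real N)\<^sup>2"
proof -
  obtain s where s: "\<forall>j. s j = 1 \<or> s j = -1" "(\<Sum>i<N. (\<Sum>j<m. s j * f j i)\<^sup>2) \<le> real m * real N"
    using sign_choice_sum_squares_le[where f = f and N = N and m = m] assms by auto
  have "(\<Sum>j<m. s j * (\<Sum>i<N. g i * f j i))\<^sup>2 \<le> real m * (real N)\<^sup>2" if g: "\<And>i. \<bar>g i\<bar> \<le> 1" for g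
  proof -
    have "(\<Sum>j<m. s j * (\<Sum>i<N. g i * f j i)) = (\<Sum>i<N. g i * (\<Sum>j<m. s j * f j i))"
      by (simp add: sum_distrib_left algebra_simps sum.swap[of _ "{..<m}"])
    also have "\<dots>\<^sup>2 \<le> (\<Sum>i<N. (g i)\<^sup>2) * (\<Sum>i<N. (\<Sum>j<m. s j * f j i)\<^sup>2)"
      by (rule Cauchy_Schwarz_ineq_sum)
    also have "\<dots> \<le> real N * (real m * real N)"
    proof (rule mult_mono)
      show "(\<Sum>i<N. (g i)\<^sup>2) \<le> real N"
        using sum_bounded_above[of "{..<N}" "\<lambda>i. (g i)\<^sup>2" 1] g by (simp add: abs_square_le_1)
    qed (use s(2) in \<open>auto simp: sum_nonneg\<close>)
    finally show ?thesis by (simp add: power2_eq_square algebra_simps)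
  qed
  with s(1) show ?thesis using that by blast
qed

lemma obtain_disjoint_injections:
  assumes "finite X" and "2 * m \<le> card X"
  obtains a b where "inj_on a {..<m}" "inj_on b {..<m}" "a ` {..<m} \<inter> b ` {..<m} = {}"
    "a ` {..<m} \<subseteq> X" "b ` {..<m} \<subseteq> X"
proof -
  obtain xs where xs: "set xs = X" "distinct xs" using finite_distinct_list[OF assms(1)] by blast
  have len: "2 * m \<le> length xs" using xs assms(2) distinct_card by fastforce
  have nth_eq: "xs ! i = xs ! k \<longleftrightarrow> i = k" if "i < 2 * m" "k < 2 * m" for i k
    using that len nth_eq_iff_index_eq[OF xs(2)] by simp
  show ?thesis
  proof
    show "inj_on (\<lambda>j. xs ! (2 * j)) {..<m}" "inj_on (\<lambda>j. xs ! (2 * j + 1)) {..<m}"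
      by (auto intro!: inj_onI simp: nth_eq)
    show "(\<lambda>j. xs ! (2 * j)) ` {..<m} \<inter> (\<lambda>j. xs ! (2 * j + 1)) ` {..<m} = {}"
      by (auto simp: nth_eq; presburger)
    show "(\<lambda>j. xs ! (2 * j)) ` {..<m} \<subseteq> X" "(\<lambda>j. xs ! (2 * j + 1)) ` {..<m} \<subseteq> X"
      using len xs(1) by auto
  qed
qed

lemma hamming_trigraph_shattered_half_card:
  assumes H: "hamming_trigraph N \<tau> \<epsilon> V E R" and nonneg: "0 \<le> \<tau> * real N" and "0 < \<epsilon>"
    and sh: "shattered V E R X"
  shows "real (card X div 2) * \<epsilon>\<^sup>2 < 1"
proof (cases "card X div 2 = 0")
  case False
  define m where "m = card X div 2"
  have "0 < m" using False m_def by simp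
  then have "finite X" unfolding m_def using card.infinite by fastforce
  then obtain a b where a: "inj_on a {..<m}" and b: "inj_on b {..<m}"
    and ab: "a ` {..<m} \<inter> b ` {..<m} = {}" and "a ` {..<m} \<subseteq> X" "b ` {..<m} \<subseteq> X"
    using obtain_disjoint_injections[of X m] unfolding m_def by auto
  define f :: "nat \<Rightarrow> nat \<Rightarrow> real" where "f j i = of_bool (b j ! i) - of_bool (a j ! i)" for j i
  have f_bound: "\<bar>f j i\<bar> \<le> 1" for j i by (simp add: f_def)
  obtain s where s: "\<And>j. s j = 1 \<or> s j = -1"
    and balanced: "\<And>g. (\<And>i. \<bar>g i\<bar> \<le> 1) \<Longrightarrow>
      (\<Sum>j<m. s j * (\<Sum>i<N. g i * f j i))\<^sup>2 \<le> real m * (real N)\<^sup>2"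
    using sign_choice_bounds_functionals[where f = f and m = m and N = N, OF f_bound] by blast
  define p where "p j = (if s j = 1 then a j else b j)" for j
  define q where "q j = (if s j = 1 then b j else a j)" for j
  define Y where "Y = p ` {..<m}"
  have "Y \<subseteq> X" unfolding Y_def p_def using \<open>a ` {..<m} \<subseteq> X\<close> \<open>b ` {..<m} \<subseteq> X\<close> by auto
  have q_far: "q j \<in> X - Y" if "j < m" for j
    using that a b ab \<open>a ` {..<m} \<subseteq> X\<close> \<open>b ` {..<m} \<subseteq> X\<close> s
    unfolding Y_def p_def q_def by (auto simp: inj_on_eq_iff)
  obtain c where "length c = N"
    and gap: "\<And>p q. p \<in> Y \<Longrightarrow> q \<in> X - Y \<Longrightarrow> \<epsilon> * real N < real (hamming c q) - real (hamming c p)"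
    using hamming_trigraph_shattered_gap[OF H nonneg sh \<open>Y \<subseteq> X\<close>] by blast
  define g :: "nat \<Rightarrow> real" where "g i = (if c ! i then -1 else 1)" for i
  define D where "D j = real (hamming c (q j)) - real (hamming c (p j))" for j
  have D_eq: "D j = s j * (\<Sum>i<N. g i * f j i)" for j
    using s[of j] unfolding D_def hamming_diff_eq_sum[OF \<open>length c = N\<close>]
    by (auto simp: g_def f_def p_def q_def sum_negf[symmetric] intro!: sum.cong)
  have "(\<Sum>j<m. \<epsilon> * real N) < (\<Sum>j<m. D j)"
    using \<open>0 < m\<close> gap q_far unfolding D_def Y_def by (intro sum_strict_mono) auto
  then have "(real m * \<epsilon> * real N)\<^sup>2 < (\<Sum>j<m. D j)\<^sup>2"
    using \<open>0 < \<epsilon>\<close> by (intro power_strict_mono) auto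
  also have "\<dots> \<le> real m * (real N)\<^sup>2"
    unfolding D_eq by (rule balanced) (simp add: g_def)
  finally have lt: "(real m * (real N)\<^sup>2) * (real m * \<epsilon>\<^sup>2) < (real m * (real N)\<^sup>2) * 1"
    by (simp add: power2_eq_square algebra_simps)
  then have "0 < real m * (real N)\<^sup>2"
    by (metis less_eq_real_def mult_eq_0_iff zero_le_mult_iff zero_le_power2 of_nat_0_le_iff)
  with lt show ?thesis
    unfolding m_def[symmetric] using mult_less_cancel_left_pos by fastforce
qed simp

lemma hamming_trigraph_shattered_card_le:
  assumes H: "hamming_trigraph N \<tau> \<epsilon> V E R" and "0 < \<epsilon>" "\<epsilon> \<le> 1"
    and sh: "shattered V E R X"
  shows "real (card X) \<le> 3 / \<epsilon>\<^sup>2"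
proof -
  have "1 \<le> 1 / \<epsilon>\<^sup>2"
    using assms(2,3) by (simp add: power_le_one)
  show ?thesis
  proof (cases "0 \<le> \<tau> * real N")
    case True
    have "real (card X div 2) < 1 / \<epsilon>\<^sup>2"
      using hamming_trigraph_shattered_half_card[OF H True \<open>0 < \<epsilon>\<close> sh] \<open>0 < \<epsilon>\<close>
      by (simp add: field_simps)
    moreover have "real (card X) \<le> 2 * real (card X div 2) + 1" by linarith
    ultimately show ?thesis using \<open>1 \<le> 1 / \<epsilon>\<^sup>2\<close> by simp
  next
    case False
    then have "real (card X) \<le> 1"
      using hamming_trigraph_shattered_card_le_1[OF H _ sh] by simp
    with \<open>1 \<le> 1 / \<epsilon>\<^sup>2\<close> show ?thesis by simp
  qed
qed

lemma vc_dim_le: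
  assumes "\<And>X. shattered V E R X \<Longrightarrow> card X \<le> k"
  shows "vc_dim V E R \<le> k"
proof (cases "{X. shattered V E R X} = {}")
  case True
  then show ?thesis unfolding vc_dim_def by (simp add: Sup_nat_def)
next
  case False
  then show ?thesis unfolding vc_dim_def using assms by (auto intro: cSup_least)
qed

theorem theorem4p1:
  shows "\<exists>C > (0::real). \<forall>(N::nat) (\<tau>::real) (\<epsilon>::real) V E R.
           0 < \<epsilon> \<and> \<epsilon> \<le> 1 \<and> hamming_trigraph N \<tau> \<epsilon> V E R
           \<longrightarrow> real (vc_dim V E R) \<le> C / \<epsilon> ^ 2"
proof (intro exI[of _ 3] conjI allI impI)
  fix N :: nat and \<tau> \<epsilon> :: real and V :: "bool list set" and E R
  assume "0 < \<epsilon> \<and> \<epsilon> \<le> 1 \<and> hamming_trigraph N \<tau> \<epsilon> V E R"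
  then have "real (card X) \<le> 3 / \<epsilon>\<^sup>2" if "shattered V E R X" for X
    using hamming_trigraph_shattered_card_le that by blast
  then have "vc_dim V E R \<le> nat \<lfloor>3 / \<epsilon>\<^sup>2\<rfloor>"
    by (intro vc_dim_le) (simp add: le_nat_floor)
  then have "real (vc_dim V E R) \<le> real (nat \<lfloor>3 / \<epsilon>\<^sup>2\<rfloor>)" by (simp only: of_nat_le_iff)
  also have "\<dots> \<le> 3 / \<epsilon>\<^sup>2" by (simp add: of_nat_floor)
  finally show "real (vc_dim V E R) \<le> 3 / \<epsilon> ^ 2" .
qed simp

end
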